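(* Let $C\geq 1$ and $n\ge 2$. Let $x_1<\dots<x_n$, $y_1<\dots<y_n$, $p_1<\dots<p_n$ be real numbers, and write $\Delta x_i=x_{i+1}-x_i$, $\Delta y_i=y_{i+1}-y_i$, $\Delta p_i=p_{i+1}-p_i$ for $1\le i\le n-1$. Suppose that for all $1\le i\le n-1$, \[ C^{-1}\Delta x_i\le \Delta p_i\le C\Delta x_i \quad\text{and}\quad C^{-1}\Big(p_{i+1}-\tfrac{\Delta y_i}{\Delta x_i}\Big)\le \tfrac{\Delta y_i}{\Delta x_i}-p_i\le C\Big(p_{i+1}-\tfrac{\Delta y_i}{\Delta x_i}\Big). \] Then there is a constant $K\ge1$ depending only on $C$ such that: (a) There exists a strictly convex $C^1$ function $f$ on $[x_1,x_n]$ with $f(x_i)=y_i$ and $f'(x_i)=p_i$ for all $i$, such that $f'$ is piecewise linear and each linear piece of $f'$ has slope in $[K^{-1},K]$. (b) Letting $D$ be $\frac{\pi}{4}$ times the infimum of the slopes of the linear pieces of $f'$ for the function $f$ in (a), the function $f$ can be modified to a convex $C^2$ function $g$ on $[x_1,x_n]$ with $g(x_i)=y_i$, $g'(x_i)=p_i$ and $g''(x_i)=D$ for all $i$, and $K^{-1}\le g''(x)\le K$ for all $x\in(x_1,x_n)$. *)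

theory Defs
  imports "HOL-Analysis.Analysis"
begin

definition strict_convex_on :: "real set \<Rightarrow> (real \<Rightarrow> real) \<Rightarrow> bool" where
  "strict_convex_on S f \<longleftrightarrow> convex S \<and>
     (\<forall>x\<in>S. \<forall>y\<in>S. x \<noteq> y \<longrightarrow> (\<forall>u. 0 < u \<and> u < 1 \<longrightarrow>
        f (u * x + (1 - u) * y) < u * f x + (1 - u) * f y))"

end

theory Submission
  imports Defs
begin

text \<open>
  On each interval [x_i, x_{i+1}] of length h let q be the secant slope and
  \<alpha> = q - p_i, \<beta> = p_{i+1} - q. The derivative f' is made piecewise linear: it rises from p_i
  to p_i + \<alpha> on a first subinterval of length l and from there to p_{i+1} on the rest. Choosing
  l = h \<beta> / (\<alpha> + \<beta>) gives \<alpha> l = \<beta> (h - l), which is exactly the condition that f' has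
  mean value q, so f interpolates the values as well as the slopes. The slopes of f' are
  (\<alpha>/\<beta>)((\<alpha>+\<beta>)/h) and (\<beta>/\<alpha>)((\<alpha>+\<beta>)/h), and the hypotheses bound both factors by C,
  so they lie in [1/C^2, C^2]; strict convexity follows since f' is strictly increasing.

  For the C^2 function, each quadratic piece of f, with f'' = s on an interval [a, a + L], is
  perturbed by (s - D) / \<omega>^2 (cos (\<omega> (t - a)) - 1) with \<omega> = 2\<pi> / L. The perturbation
  vanishes with its derivative at both ends, so values and slopes at the knots are kept, and the
  second derivative becomes s - (s - D) cos (\<omega> (t - a)), which is continuous, equals D at every
  knot and lies between D and 2 s. Hence K = 2 C^2 works.
\<close>

section \<open>Gluing functions along a knot sequence\<close>

fun glue :: "(nat \<Rightarrow> real \<Rightarrow> real) \<Rightarrow> (nat \<Rightarrow> real) \<Rightarrow> nat \<Rightarrow> real \<Rightarrow> real" where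
  "glue \<phi> a 0 t = \<phi> 0 t"
| "glue \<phi> a (Suc m) t = (if t \<le> a m then glue \<phi> a m t else \<phi> m t)"

definition pieces_join :: "(nat \<Rightarrow> real \<Rightarrow> real) \<Rightarrow> (nat \<Rightarrow> real) \<Rightarrow> (nat \<Rightarrow> real) \<Rightarrow> nat \<Rightarrow> bool" where
  "pieces_join \<phi> a V m \<longleftrightarrow>
     (\<forall>j<m. a j < a (Suc j) \<and> \<phi> j (a j) = V j \<and> \<phi> j (a (Suc j)) = V (Suc j))"

lemma pieces_join_Suc:
  "pieces_join \<phi> a V (Suc m) \<longleftrightarrow> pieces_join \<phi> a V m \<and>
     a m < a (Suc m) \<and> \<phi> m (a m) = V m \<and> \<phi> m (a (Suc m)) = V (Suc m)"
  by (auto simp: pieces_join_def less_Suc_eq)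

lemma pieces_join_knots_mono:
  assumes "pieces_join \<phi> a V m" and "i \<le> k" and "k \<le> m"
  shows "a i \<le> a k"
  using assms(2,3)
proof (induction k rule: dec_induct)
  case (step l)
  then have "a l < a (Suc l)"
    using assms by (simp add: pieces_join_def)
  with step show ?case by simp
qed simp

lemma glue_at_last_knot:
  assumes "pieces_join \<phi> a V (Suc m)"
  shows "glue \<phi> a m (a m) = \<phi> m (a m)"
proof (cases m)
  case (Suc k)
  with assms show ?thesis
    by (simp add: pieces_join_Suc)
qed simp

lemma glue_eq_piece:
  assumes "pieces_join \<phi> a V m" and "j < m" and "t \<in> {a j..a (Suc j)}"
  shows "glue \<phi> a m t = \<phi> j t"
  using assms
proof (induction m arbitrary: j t)
  case (Suc k)
  have join: "pieces_join \<phi> a V k"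
    using Suc.prems(1) by (simp add: pieces_join_Suc)
  show ?case
  proof (cases "j < k")
    case True
    then have "t \<le> a k"
      using Suc.prems(3) pieces_join_knots_mono[OF join, of "Suc j" k] by simp
    with Suc.IH[OF join True Suc.prems(3)] show ?thesis by simp
  next
    case False
    with Suc.prems(2) have "j = k"
      by simp
    moreover from this Suc.prems(3) have "a k \<le> t"
      by simp
    ultimately show ?thesis
      using glue_at_last_knot[OF Suc.prems(1)] by (cases "t = a k") simp_all
  qed
qed simp

lemma glue_at_knot:
  assumes "pieces_join \<phi> a V m" and "0 < m" and "j \<le> m"
  shows "glue \<phi> a m (a j) = V j"
proof (cases "j < m")
  case True
  with assms(1) have "a j \<le> a (Suc j)" "\<phi> j (a j) = V j"
    by (simp_all add: pieces_join_def less_imp_le)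
  with glue_eq_piece[OF assms(1) True] show ?thesis by simp
next
  case False
  with assms(2,3) obtain k where k: "m = Suc k" "j = Suc k"
    by (metis Suc_pred' le_neq_implies_less)
  with assms(1) have "a k \<le> a (Suc k)" "\<phi> k (a (Suc k)) = V (Suc k)"
    by (simp_all add: pieces_join_def less_imp_le)
  with glue_eq_piece[OF assms(1), of k "a j"] k show ?thesis by simp
qed

lemma glue_piece_cases:
  assumes "pieces_join \<phi> a V m" and "0 < m" and "t \<in> {a 0..a m}"
  obtains j where "j < m" "t \<in> {a j..a (Suc j)}" "glue \<phi> a m t = \<phi> j t"
proof -
  have "\<exists>j<m. t \<in> {a j..a (Suc j)}"
    using assms
  proof (induction m)
    case (Suc k)
    show ?case
    proof (cases "0 < k \<and> t \<le> a k")
      case True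
      with Suc show ?thesis
        by (auto simp: pieces_join_Suc less_Suc_eq)
    next
      case False
      with Suc.prems show ?thesis
        by (auto simp: pieces_join_Suc intro!: exI[of _ k])
    qed
  qed simp
  with assms(1) that glue_eq_piece show ?thesis by blast
qed

lemma has_real_derivative_if_le:
  fixes f g :: "real \<Rightarrow> real"
  assumes "l \<le> b" and "b \<le> r"
    and f: "\<And>t. t \<in> {l..b} \<Longrightarrow> (f has_real_derivative f' t) (at t within {l..b})"
    and g: "\<And>t. t \<in> {b..r} \<Longrightarrow> (g has_real_derivative g' t) (at t within {b..r})"
    and "f b = g b" and "f' b = g' b" and t: "t \<in> {l..r}"
  shows "((\<lambda>t. if t \<le> b then f t else g t) has_real_derivative (if t \<le> b then f' t else g' t))
           (at t within {l..r})"
proof -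
  have touch: "closure {l..b} \<inter> closure {b..r} = {b}" and cover: "{l..b} \<union> {b..r} = {l..r}"
    using assms(1,2) by auto
  have "((\<lambda>t. if t \<in> {l..b} then f t else g t) has_derivative
      (if t \<in> {l..b} then (*) (f' t) else (*) (g' t))) (at t within {l..b} \<union> {b..r})"
    by (rule has_derivative_If_within_closures)
      (use f g t assms(1,2,5,6) in \<open>auto simp: touch cover has_field_derivative_def insert_absorb\<close>)
  then have "((\<lambda>t. if t \<in> {l..b} then f t else g t) has_real_derivative
      (if t \<le> b then f' t else g' t)) (at t within {l..r})"
    using t by (auto simp: cover has_field_derivative_def split: if_splits)
  then show ?thesis
    by (rule has_field_derivative_transform_within[OF _ zero_less_one t]) auto
qed

lemma glue_has_real_derivative:
  assumes "pieces_join \<phi> a V m" and "pieces_join \<psi> a W m"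
    and "\<And>j t. j < m \<Longrightarrow> t \<in> {a j..a (Suc j)} \<Longrightarrow>
           (\<phi> j has_real_derivative \<psi> j t) (at t within {a j..a (Suc j)})"
    and "t \<in> {a 0..a m}"
  shows "(glue \<phi> a m has_real_derivative glue \<psi> a m t) (at t within {a 0..a m})"
  using assms
proof (induction m arbitrary: t)
  case 0
  then show ?case
    by (simp add: has_field_derivative_def has_derivative_within_singleton_iff bounded_linear_mult_right)
next
  case (Suc k)
  have "a 0 \<le> a k"
    using pieces_join_knots_mono[OF Suc.prems(1), of 0 k] by simp
  then have "((\<lambda>t. if t \<le> a k then glue \<phi> a k t else \<phi> k t) has_real_derivative
      (if t \<le> a k then glue \<psi> a k t else \<psi> k t)) (at t within {a 0..a (Suc k)})"
    using Suc by (intro has_real_derivative_if_le)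
      (auto simp: pieces_join_Suc glue_at_last_knot less_imp_le)
  then show ?case
    by (simp cong: if_cong)
qed

lemma glue_continuous_on:
  assumes "pieces_join \<phi> a V m" and "\<And>j. j < m \<Longrightarrow> continuous_on {a j..a (Suc j)} (\<phi> j)"
  shows "continuous_on {a 0..a m} (glue \<phi> a m)"
  using assms
proof (induction m)
  case (Suc k)
  have "a 0 \<le> a k" and "a k < a (Suc k)"
    using pieces_join_knots_mono[OF Suc.prems(1), of 0 k] Suc.prems(1)
    by (simp_all add: pieces_join_Suc)
  then have "{a 0..a (Suc k)} = {a 0..a k} \<union> {a k..a (Suc k)}"
    by auto
  moreover have "glue \<phi> a (Suc k) = (\<lambda>t. if t \<le> a k then glue \<phi> a k t else \<phi> k t)"
    by auto
  ultimately show ?case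
    using Suc glue_at_last_knot[OF Suc.prems(1)]
    by (auto simp: pieces_join_Suc intro!: continuous_on_cases)
qed simp

lemma glue_strict_mono_on:
  assumes "pieces_join \<phi> a V m" and "\<And>j. j < m \<Longrightarrow> strict_mono_on {a j..a (Suc j)} (\<phi> j)"
  shows "strict_mono_on {a 0..a m} (glue \<phi> a m)"
  using assms
proof (induction m)
  case (Suc k)
  have IH: "strict_mono_on {a 0..a k} (glue \<phi> a k)"
    using Suc by (simp add: pieces_join_Suc)
  have last: "strict_mono_on {a k..a (Suc k)} (\<phi> k)"
    using Suc.prems(2) by simp
  have "a 0 \<le> a k"
    using pieces_join_knots_mono[OF Suc.prems(1), of 0 k] by simp
  show ?case
  proof (rule strict_mono_onI)
    fix r s assume r: "r \<in> {a 0..a (Suc k)}" and s: "s \<in> {a 0..a (Suc k)}" and "r < s"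
    consider "s \<le> a k" | "r \<le> a k" "a k < s" | "a k < r"
      by linarith
    then show "glue \<phi> a (Suc k) r < glue \<phi> a (Suc k) s"
    proof cases
      case 1
      with IH r s \<open>r < s\<close> show ?thesis by (auto simp: strict_mono_on_def)
    next
      case 2
      have "glue \<phi> a k r \<le> glue \<phi> a k (a k)"
        using IH r 2 \<open>a 0 \<le> a k\<close> by (cases "r = a k") (auto simp: strict_mono_on_def less_imp_le)
      also have "\<dots> = \<phi> k (a k)"
        by (rule glue_at_last_knot[OF Suc.prems(1)])
      also have "\<dots> < \<phi> k s"
        using last s 2 by (auto simp: strict_mono_on_def)
      finally show ?thesis
        using 2 by simp
    next
      case 3
      with last r s \<open>r < s\<close> show ?thesis by (auto simp: strict_mono_on_def)
    qed
  qed
qed (simp add: strict_mono_on_def)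

section \<open>Convexity from a strictly increasing derivative\<close>

lemma mvt_real_interval:
  fixes f :: "real \<Rightarrow> real"
  assumes "\<And>t. t \<in> {a..b} \<Longrightarrow> (f has_real_derivative f' t) (at t within {a..b})"
    and "x < y" and "x \<in> {a..b}" and "y \<in> {a..b}"
  obtains \<xi> where "\<xi> \<in> {x<..<y}" and "f y - f x = f' \<xi> * (y - x)"
proof -
  have deriv: "(f has_derivative (\<lambda>h. f' t * h)) (at t within {x..y})" if "x \<le> t" "t \<le> y" for t
  proof -
    have "{x..y} \<subseteq> {a..b}" and "t \<in> {a..b}"
      using assms(3,4) that by auto
    with assms(1) show ?thesis
      unfolding has_field_derivative_def by (blast intro: has_derivative_subset)
  qed
  obtain \<xi> where "\<xi> \<in> {x<..<y}" and "f y - f x = f' \<xi> * (y - x)"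
    using mvt_simple[OF assms(2) deriv] by blast
  with that show ?thesis .
qed

lemma strict_convex_on_linorderI:
  fixes f :: "real \<Rightarrow> real"
  assumes "convex S"
    and "\<And>t x y. 0 < t \<Longrightarrow> t < 1 \<Longrightarrow> x \<in> S \<Longrightarrow> y \<in> S \<Longrightarrow> x < y \<Longrightarrow>
           f ((1 - t) * x + t * y) < (1 - t) * f x + t * f y"
  shows "strict_convex_on S f"
  unfolding strict_convex_on_def
proof (intro conjI assms(1) ballI allI impI)
  fix x y u :: real assume "x \<in> S" "y \<in> S" "x \<noteq> y" and u: "0 < u \<and> u < 1"
  then consider "x < y" | "y < x"
    by linarith
  then show "f (u * x + (1 - u) * y) < u * f x + (1 - u) * f y"
  proof cases
    case 1
    with assms(2)[of "1 - u" x y] \<open>x \<in> S\<close> \<open>y \<in> S\<close> u show ?thesis by simp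
  next
    case 2
    with assms(2)[of u y x] \<open>x \<in> S\<close> \<open>y \<in> S\<close> u show ?thesis by (simp add: add.commute)
  qed
qed

lemma strict_convex_on_imp_convex_on:
  assumes "strict_convex_on S f"
  shows "convex_on S f"
proof (rule convex_on_linorderI)
  show "convex S"
    using assms by (simp add: strict_convex_on_def)
  fix t x y :: real assume "0 < t" "t < 1" "x \<in> S" "y \<in> S" "x < y"
  with assms have "\<forall>u. 0 < u \<and> u < 1 \<longrightarrow> f (u * x + (1 - u) * y) < u * f x + (1 - u) * f y"
    unfolding strict_convex_on_def by auto
  from this[rule_format, of "1 - t"] \<open>0 < t\<close> \<open>t < 1\<close>
  show "f ((1 - t) *\<^sub>R x + t *\<^sub>R y) \<le> (1 - t) * f x + t * f y"
    by simp
qed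

lemma strict_convex_on_realI:
  fixes f :: "real \<Rightarrow> real"
  assumes deriv: "\<And>t. t \<in> {a..b} \<Longrightarrow> (f has_real_derivative f' t) (at t within {a..b})"
    and mono: "strict_mono_on {a..b} f'"
  shows "strict_convex_on {a..b} f"
proof (rule strict_convex_on_linorderI)
  fix t x y :: real assume t: "0 < t" "t < 1" and x: "x \<in> {a..b}" and y: "y \<in> {a..b}" and "x < y"
  define z where "z = (1 - t) * x + t * y"
  have zx: "z - x = t * (y - x)" and yz: "y - z = (1 - t) * (y - x)"
    by (simp_all add: z_def algebra_simps)
  have "0 < t * (y - x)" and "0 < (1 - t) * (y - x)"
    using t \<open>x < y\<close> by simp_all
  then have "x < z" and "z < y"
    by (simp_all add: z_def algebra_simps)
  with x y have z: "z \<in> {a..b}"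
    by simp
  obtain \<xi>\<^sub>1 where \<xi>\<^sub>1: "\<xi>\<^sub>1 \<in> {x<..<z}" "f z - f x = f' \<xi>\<^sub>1 * (z - x)"
    by (rule mvt_real_interval[OF deriv \<open>x < z\<close> x z])
  obtain \<xi>\<^sub>2 where \<xi>\<^sub>2: "\<xi>\<^sub>2 \<in> {z<..<y}" "f y - f z = f' \<xi>\<^sub>2 * (y - z)"
    by (rule mvt_real_interval[OF deriv \<open>z < y\<close> z y])
  have "f' \<xi>\<^sub>1 < f' \<xi>\<^sub>2"
    using mono \<xi>\<^sub>1(1) \<xi>\<^sub>2(1) x y by (auto simp: strict_mono_on_def)
  have "(1 - t) * f x + t * f y - f z = t * (f y - f z) - (1 - t) * (f z - f x)"
    by (simp add: algebra_simps)
  also have "\<dots> = t * (1 - t) * (y - x) * (f' \<xi>\<^sub>2 - f' \<xi>\<^sub>1)"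
    unfolding \<xi>\<^sub>1(2) \<xi>\<^sub>2(2) zx yz by (simp add: algebra_simps)
  also have "\<dots> > 0"
    using t \<open>x < y\<close> \<open>f' \<xi>\<^sub>1 < f' \<xi>\<^sub>2\<close> by (intro mult_pos_pos) simp_all
  finally have "f z < (1 - t) * f x + t * f y"
    by simp
  then show "f ((1 - t) * x + t * y) < (1 - t) * f x + t * f y"
    by (simp only: z_def)
qed simp

lemma has_real_derivative_pos_imp_strict_mono_on:
  fixes f :: "real \<Rightarrow> real"
  assumes "\<And>t. t \<in> {a..b} \<Longrightarrow> (f has_real_derivative f' t) (at t within {a..b})"
    and "\<And>t. t \<in> {a..b} \<Longrightarrow> 0 < f' t"
  shows "strict_mono_on {a..b} f"
proof (rule strict_mono_onI)
  fix r s assume r: "r \<in> {a..b}" and s: "s \<in> {a..b}" and "r < s"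
  obtain \<xi> where "\<xi> \<in> {r<..<s}" "f s - f r = f' \<xi> * (s - r)"
    by (rule mvt_real_interval[OF assms(1) \<open>r < s\<close> r s])
  moreover have "0 < f' \<xi>"
    using assms(2) \<open>\<xi> \<in> {r<..<s}\<close> r s by simp
  ultimately have "0 < f s - f r"
    using \<open>r < s\<close> by simp
  then show "f r < f s"
    by simp
qed

section \<open>Quadratic splines and their smoothing\<close>

locale quadratic_spline =
  fixes a :: "nat \<Rightarrow> real" and m :: nat and Y P S :: "nat \<Rightarrow> real"
  assumes pieces_pos: "0 < m"
    and knots_increasing: "j < m \<Longrightarrow> a j < a (Suc j)"
    and value_step: "j < m \<Longrightarrow> Y (Suc j) = Y j + P j * (a (Suc j) - a j) + S j / 2 * (a (Suc j) - a j)^2"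
    and slope_step: "j < m \<Longrightarrow> P (Suc j) = P j + S j * (a (Suc j) - a j)"
    and curvature_pos: "j < m \<Longrightarrow> 0 < S j"
begin

definition quadratic_piece :: "nat \<Rightarrow> real \<Rightarrow> real" where
  "quadratic_piece j t = Y j + P j * (t - a j) + S j / 2 * (t - a j)^2"

definition linear_piece :: "nat \<Rightarrow> real \<Rightarrow> real" where
  "linear_piece j t = P j + S j * (t - a j)"

definition spline :: "real \<Rightarrow> real" where
  "spline = glue quadratic_piece a m"

definition spline' :: "real \<Rightarrow> real" where
  "spline' = glue linear_piece a m"

lemma pieces_join_quadratic: "pieces_join quadratic_piece a Y m"
  using knots_increasing value_step by (simp add: pieces_join_def quadratic_piece_def)

lemma pieces_join_linear: "pieces_join linear_piece a P m"
  using knots_increasing slope_step by (simp add: pieces_join_def linear_piece_def)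

lemma quadratic_piece_has_derivative:
  "(quadratic_piece j has_real_derivative linear_piece j t) (at t within T)"
  unfolding quadratic_piece_def[abs_def] linear_piece_def
  by (auto intro!: derivative_eq_intros simp: power2_eq_square algebra_simps)

lemma spline_has_derivative:
  "t \<in> {a 0..a m} \<Longrightarrow> (spline has_real_derivative spline' t) (at t within {a 0..a m})"
  unfolding spline_def spline'_def
  by (rule glue_has_real_derivative[OF pieces_join_quadratic pieces_join_linear
        quadratic_piece_has_derivative])

lemma continuous_on_spline': "continuous_on {a 0..a m} spline'"
  unfolding spline'_def
  by (rule glue_continuous_on[OF pieces_join_linear]) (simp add: linear_piece_def continuous_intros)

lemma strict_mono_on_spline': "strict_mono_on {a 0..a m} spline'"
  unfolding spline'_def
  by (rule glue_strict_mono_on[OF pieces_join_linear])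
    (auto simp: linear_piece_def strict_mono_on_def curvature_pos)

lemma strict_convex_on_spline: "strict_convex_on {a 0..a m} spline"
  using strict_convex_on_realI[OF spline_has_derivative strict_mono_on_spline'] .

lemma spline_at_knot: "j \<le> m \<Longrightarrow> spline (a j) = Y j \<and> spline' (a j) = P j"
  using glue_at_knot[OF pieces_join_quadratic pieces_pos] glue_at_knot[OF pieces_join_linear pieces_pos]
  by (simp add: spline_def spline'_def)

lemma spline'_on_piece:
  assumes "j < m" and "t \<in> {a j..a (Suc j)}"
  shows "spline' t = spline' (a j) + S j * (t - a j)"
proof -
  have "a j \<in> {a j..a (Suc j)}"
    using knots_increasing[OF assms(1)] by simp
  with assms show ?thesis
    unfolding spline'_def by (simp add: glue_eq_piece[OF pieces_join_linear] linear_piece_def)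
qed

end

locale smoothed_quadratic_spline = quadratic_spline +
  fixes D :: real
  assumes D_pos: "0 < D" and D_le_curvature: "j < m \<Longrightarrow> D \<le> S j"
begin

definition frequency :: "nat \<Rightarrow> real" where
  "frequency j = 2 * pi / (a (Suc j) - a j)"

definition smooth_piece :: "nat \<Rightarrow> real \<Rightarrow> real" where
  "smooth_piece j t =
     quadratic_piece j t + (S j - D) / frequency j ^ 2 * (cos (frequency j * (t - a j)) - 1)"

definition smooth_piece' :: "nat \<Rightarrow> real \<Rightarrow> real" where
  "smooth_piece' j t = linear_piece j t - (S j - D) / frequency j * sin (frequency j * (t - a j))"

definition smooth_piece'' :: "nat \<Rightarrow> real \<Rightarrow> real" where
  "smooth_piece'' j t = S j - (S j - D) * cos (frequency j * (t - a j))"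

definition smoothed :: "real \<Rightarrow> real" where
  "smoothed = glue smooth_piece a m"

definition smoothed' :: "real \<Rightarrow> real" where
  "smoothed' = glue smooth_piece' a m"

definition smoothed'' :: "real \<Rightarrow> real" where
  "smoothed'' = glue smooth_piece'' a m"

lemma frequency_nonzero: "j < m \<Longrightarrow> frequency j \<noteq> 0"
  using knots_increasing[of j] by (simp add: frequency_def)

lemma frequency_times_length: "j < m \<Longrightarrow> frequency j * (a (Suc j) - a j) = 2 * pi"
  using knots_increasing[of j] by (simp add: frequency_def)

lemma pieces_join_smooth: "pieces_join smooth_piece a Y m"
  using pieces_join_quadratic frequency_times_length
  by (simp add: pieces_join_def smooth_piece_def)

lemma pieces_join_smooth': "pieces_join smooth_piece' a P m"
  using pieces_join_linear frequency_times_length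
  by (simp add: pieces_join_def smooth_piece'_def)

lemma pieces_join_smooth'': "pieces_join smooth_piece'' a (\<lambda>_. D) m"
  using knots_increasing frequency_times_length
  by (simp add: pieces_join_def smooth_piece''_def)

lemma smooth_piece_has_derivative:
  "j < m \<Longrightarrow> (smooth_piece j has_real_derivative smooth_piece' j t) (at t within T)"
  using frequency_nonzero[of j]
  unfolding smooth_piece_def smooth_piece'_def quadratic_piece_def linear_piece_def
  by (auto intro!: derivative_eq_intros simp: power2_eq_square field_simps)

lemma smooth_piece'_has_derivative:
  "j < m \<Longrightarrow> (smooth_piece' j has_real_derivative smooth_piece'' j t) (at t within T)"
  using frequency_nonzero[of j]
  unfolding smooth_piece'_def smooth_piece''_def linear_piece_def
  by (auto intro!: derivative_eq_intros simp: field_simps)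

lemma smooth_piece''_bounds:
  assumes "j < m"
  shows "D \<le> smooth_piece'' j t" and "smooth_piece'' j t \<le> 2 * S j"
proof -
  let ?c = "cos (frequency j * (t - a j))"
  have "0 \<le> S j - D"
    using D_le_curvature[OF assms] by simp
  then have "(S j - D) * ?c \<le> S j - D" and "- (S j - D) \<le> (S j - D) * ?c"
    using mult_left_mono[of ?c 1 "S j - D"] mult_left_mono[of "-1" ?c "S j - D"] by simp_all
  then show "D \<le> smooth_piece'' j t" and "smooth_piece'' j t \<le> 2 * S j"
    using D_pos by (simp_all add: smooth_piece''_def)
qed

lemma smoothed_has_derivative:
  "t \<in> {a 0..a m} \<Longrightarrow> (smoothed has_real_derivative smoothed' t) (at t within {a 0..a m})"
  unfolding smoothed_def smoothed'_def
  by (rule glue_has_real_derivative[OF pieces_join_smooth pieces_join_smooth'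
        smooth_piece_has_derivative])

lemma smoothed'_has_derivative:
  "t \<in> {a 0..a m} \<Longrightarrow> (smoothed' has_real_derivative smoothed'' t) (at t within {a 0..a m})"
  unfolding smoothed'_def smoothed''_def
  by (rule glue_has_real_derivative[OF pieces_join_smooth' pieces_join_smooth''
        smooth_piece'_has_derivative])

lemma continuous_on_smoothed'': "continuous_on {a 0..a m} smoothed''"
  unfolding smoothed''_def
  by (rule glue_continuous_on[OF pieces_join_smooth'']) (simp add: smooth_piece''_def continuous_intros)

lemma smoothed''_bounds:
  assumes "t \<in> {a 0..a m}"
  shows "D \<le> smoothed'' t" and "(\<And>j. j < m \<Longrightarrow> S j \<le> B) \<Longrightarrow> smoothed'' t \<le> 2 * B"
proof -
  obtain j where "j < m" and "smoothed'' t = smooth_piece'' j t"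
    using glue_piece_cases[OF pieces_join_smooth'' pieces_pos assms] by (metis smoothed''_def)
  with smooth_piece''_bounds show "D \<le> smoothed'' t" and "(\<And>j. j < m \<Longrightarrow> S j \<le> B) \<Longrightarrow> smoothed'' t \<le> 2 * B"
    by (fastforce intro: order_trans)+
qed

lemma strict_convex_on_smoothed: "strict_convex_on {a 0..a m} smoothed"
proof (rule strict_convex_on_realI[OF smoothed_has_derivative])
  show "strict_mono_on {a 0..a m} smoothed'"
    using smoothed'_has_derivative smoothed''_bounds(1) D_pos
    by (force intro: has_real_derivative_pos_imp_strict_mono_on)
qed

lemma smoothed_at_knot:
  "j \<le> m \<Longrightarrow> smoothed (a j) = Y j \<and> smoothed' (a j) = P j \<and> smoothed'' (a j) = D"
  using glue_at_knot[OF pieces_join_smooth pieces_pos] glue_at_knot[OF pieces_join_smooth' pieces_pos]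
    glue_at_knot[OF pieces_join_smooth'' pieces_pos]
  by (simp add: smoothed_def smoothed'_def smoothed''_def)

end

section \<open>Splitting an interval into two quadratic pieces\<close>

text \<open>
  The equations have the shape of the assumptions value_step and slope_step of quadratic_spline,
  for the piece of slope \<alpha> / l followed by the piece of slope \<beta> / (h - l).
\<close>

lemma two_piece_interpolation:
  fixes h \<alpha> \<beta> Y P :: real
  assumes "0 < h" and "0 < \<alpha>" and "0 < \<beta>"
  defines "l \<equiv> h * \<beta> / (\<alpha> + \<beta>)"
  shows "0 < l" and "l < h"
    and "Y + (P + \<alpha> / 2) * l = Y + P * l + \<alpha> / l / 2 * l^2"
    and "P + \<alpha> = P + \<alpha> / l * l"
    and "Y + h * (P + \<alpha>) = Y + (P + \<alpha> / 2) * l + (P + \<alpha>) * (h - l) + \<beta> / (h - l) / 2 * (h - l)^2"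
    and "P + \<alpha> + \<beta> = P + \<alpha> + \<beta> / (h - l) * (h - l)"
proof -
  have "h - l = h * \<alpha> / (\<alpha> + \<beta>)"
    using assms(2,3) by (simp add: l_def field_simps)
  then have balanced: "\<alpha> * l = \<beta> * (h - l)"
    by (simp add: l_def)
  have "0 < l" and "0 < h - l"
    using assms(1-3) \<open>h - l = _\<close> by (simp_all add: l_def)
  then show "0 < l" and "l < h" and "P + \<alpha> = P + \<alpha> / l * l"
    and "P + \<alpha> + \<beta> = P + \<alpha> + \<beta> / (h - l) * (h - l)"
    by simp_all
  have half: "c / d / 2 * d^2 = c * d / 2" if "d \<noteq> 0" for c d :: real
    using that by (simp add: power2_eq_square)
  have halves: "\<alpha> / l / 2 * l^2 = \<alpha> * l / 2" "\<beta> / (h - l) / 2 * (h - l)^2 = \<beta> * (h - l) / 2"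
    using \<open>0 < l\<close> \<open>0 < h - l\<close> by (intro half; simp)+
  show "Y + (P + \<alpha> / 2) * l = Y + P * l + \<alpha> / l / 2 * l^2"
    unfolding halves by (simp add: algebra_simps)
  show "Y + h * (P + \<alpha>) = Y + (P + \<alpha> / 2) * l + (P + \<alpha>) * (h - l) + \<beta> / (h - l) / 2 * (h - l)^2"
    unfolding halves using balanced by (simp add: algebra_simps)
qed

lemma two_piece_curvatures_bounded:
  fixes C h \<alpha> \<beta> :: real
  assumes "1 \<le> C" and "0 < h" and "0 < \<alpha>" and "0 < \<beta>"
    and "\<beta> / C \<le> \<alpha>" and "\<alpha> \<le> C * \<beta>" and "h / C \<le> \<alpha> + \<beta>" and "\<alpha> + \<beta> \<le> C * h"
  defines "l \<equiv> h * \<beta> / (\<alpha> + \<beta>)"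
  shows "1 / C^2 \<le> \<alpha> / l" and "\<alpha> / l \<le> C^2"
    and "1 / C^2 \<le> \<beta> / (h - l)" and "\<beta> / (h - l) \<le> C^2"
proof -
  have product_bounds: "1 / C^2 \<le> u * v \<and> u * v \<le> C^2"
    if "1 / C \<le> u" "u \<le> C" "1 / C \<le> v" "v \<le> C" for u v :: real
  proof -
    have "0 < 1 / C"
      using assms(1) by simp
    with that have "1 / C * (1 / C) \<le> u * v" and "u * v \<le> C * C"
      by (intro mult_mono; linarith)+
    then show ?thesis
      by (simp add: power2_eq_square)
  qed
  have "h - l = h * \<alpha> / (\<alpha> + \<beta>)"
    using assms(3,4) by (simp add: l_def field_simps)
  then have left: "\<alpha> / l = \<alpha> / \<beta> * ((\<alpha> + \<beta>) / h)"
    and right: "\<beta> / (h - l) = \<beta> / \<alpha> * ((\<alpha> + \<beta>) / h)"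
    by (simp_all add: l_def)
  have ratios: "1 / C \<le> \<alpha> / \<beta>" "\<alpha> / \<beta> \<le> C" "1 / C \<le> \<beta> / \<alpha>" "\<beta> / \<alpha> \<le> C"
    "1 / C \<le> (\<alpha> + \<beta>) / h" "(\<alpha> + \<beta>) / h \<le> C"
    using assms(1-8) by (simp_all add: field_simps)
  show "1 / C^2 \<le> \<alpha> / l" and "\<alpha> / l \<le> C^2"
    unfolding left using product_bounds[OF ratios(1,2,5,6)] by blast+
  show "1 / C^2 \<le> \<beta> / (h - l)" and "\<beta> / (h - l) \<le> C^2"
    unfolding right using product_bounds[OF ratios(3,4,5,6)] by blast+
qed

section \<open>The Hermite data of the theorem\<close>

locale convex_hermite_data =
  fixes C :: real and n :: nat and x y p :: "nat \<Rightarrow> real"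
  assumes C_ge_1: "1 \<le> C" and n_ge_2: "2 \<le> n"
    and x_increasing: "i \<in> {1..<n} \<Longrightarrow> x i < x (Suc i)"
    and slope_change_lower: "i \<in> {1..<n} \<Longrightarrow> (x (Suc i) - x i) / C \<le> p (Suc i) - p i"
    and slope_change_upper: "i \<in> {1..<n} \<Longrightarrow> p (Suc i) - p i \<le> C * (x (Suc i) - x i)"
    and secant_lower: "i \<in> {1..<n} \<Longrightarrow>
      (p (Suc i) - (y (Suc i) - y i) / (x (Suc i) - x i)) / C
        \<le> (y (Suc i) - y i) / (x (Suc i) - x i) - p i"
    and secant_upper: "i \<in> {1..<n} \<Longrightarrow>
      (y (Suc i) - y i) / (x (Suc i) - x i) - p i
        \<le> C * (p (Suc i) - (y (Suc i) - y i) / (x (Suc i) - x i))"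
begin

definition secant :: "nat \<Rightarrow> real" where
  "secant i = (y (Suc i) - y i) / (x (Suc i) - x i)"

definition left_gap :: "nat \<Rightarrow> real" where
  "left_gap i = secant i - p i"

definition right_gap :: "nat \<Rightarrow> real" where
  "right_gap i = p (Suc i) - secant i"

definition split_length :: "nat \<Rightarrow> real" where
  "split_length i = (x (Suc i) - x i) * right_gap i / (left_gap i + right_gap i)"

text \<open>
  Index 2 (i - 1) of the refined knot sequence is the data point x i and index 2 i - 1 the split
  point of [x i, x (i + 1)], so piece j lies in the interval starting at x (j div 2 + 1).
\<close>

definition knot :: "nat \<Rightarrow> real" where
  "knot j = x (Suc (j div 2)) + (if even j then 0 else split_length (Suc (j div 2)))"

definition knot_slope :: "nat \<Rightarrow> real" where
  "knot_slope j = p (Suc (j div 2)) + (if even j then 0 else left_gap (Suc (j div 2)))"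

definition knot_value :: "nat \<Rightarrow> real" where
  "knot_value j = y (Suc (j div 2)) +
     (if even j then 0
      else (p (Suc (j div 2)) + left_gap (Suc (j div 2)) / 2) * split_length (Suc (j div 2)))"

definition piece_curvature :: "nat \<Rightarrow> real" where
  "piece_curvature j = (let i = Suc (j div 2) in
     if even j then left_gap i / split_length i else right_gap i / (x (Suc i) - x i - split_length i))"

lemma gap_bounds:
  assumes "i \<in> {1..<n}"
  shows "right_gap i / C \<le> left_gap i" and "left_gap i \<le> C * right_gap i"
    and "(x (Suc i) - x i) / C \<le> left_gap i + right_gap i"
    and "left_gap i + right_gap i \<le> C * (x (Suc i) - x i)"
  using secant_lower[OF assms] secant_upper[OF assms] slope_change_lower[OF assms]
    slope_change_upper[OF assms]
  by (simp_all add: left_gap_def right_gap_def secant_def)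

lemma gaps_pos:
  assumes "i \<in> {1..<n}"
  shows "0 < left_gap i" and "0 < right_gap i"
proof -
  have "0 < left_gap i + right_gap i"
    using x_increasing[OF assms] C_ge_1 gap_bounds(3)[OF assms] by (smt (verit) divide_pos_pos)
  moreover have "right_gap i \<le> 0 \<Longrightarrow> C * right_gap i \<le> 0"
    using C_ge_1 by (simp add: mult_nonneg_nonpos)
  ultimately show "0 < right_gap i"
    using gap_bounds(2)[OF assms] by linarith
  with gap_bounds(1)[OF assms] C_ge_1 show "0 < left_gap i"
    by (smt (verit) divide_pos_pos)
qed

lemma y_step: "i \<in> {1..<n} \<Longrightarrow> y (Suc i) = y i + (x (Suc i) - x i) * (p i + left_gap i)"
  using x_increasing[of i] by (simp add: left_gap_def secant_def)

lemma piece_step: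
  assumes "j < 2 * (n - 1)"
  shows "knot j < knot (Suc j)" (is ?increasing)
    and "knot_value (Suc j) = knot_value j + knot_slope j * (knot (Suc j) - knot j)
           + piece_curvature j / 2 * (knot (Suc j) - knot j)^2" (is ?value)
    and "knot_slope (Suc j) = knot_slope j + piece_curvature j * (knot (Suc j) - knot j)" (is ?slope)
proof -
  define i where "i = Suc (j div 2)"
  have i: "i \<in> {1..<n}"
    using assms by (auto simp: i_def)
  have "0 < x (Suc i) - x i"
    using x_increasing[OF i] by simp
  note split = two_piece_interpolation[OF this gaps_pos[OF i], folded split_length_def]
  have "?increasing \<and> ?value \<and> ?slope"
  proof (cases "even j")
    case True
    then have diff: "knot (Suc j) - knot j = split_length i"
      and value_eqs: "knot_value j = y i"
        "knot_value (Suc j) = y i + (p i + left_gap i / 2) * split_length i"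
      and slope_eqs: "knot_slope j = p i" "knot_slope (Suc j) = p i + left_gap i"
      and curvature: "piece_curvature j = left_gap i / split_length i"
      by (simp_all add: knot_def knot_value_def knot_slope_def piece_curvature_def i_def[symmetric])
    have ?increasing
      using diff split(1) by linarith
    moreover have ?value
      unfolding diff value_eqs slope_eqs curvature by (rule split(3))
    moreover have ?slope
      unfolding diff slope_eqs curvature by (rule split(4))
    ultimately show ?thesis
      by blast
  next
    case False
    then have diff: "knot (Suc j) - knot j = x (Suc i) - x i - split_length i"
      and value_eqs: "knot_value j = y i + (p i + left_gap i / 2) * split_length i"
        "knot_value (Suc j) = y i + (x (Suc i) - x i) * (p i + left_gap i)"
      and slope_eqs: "knot_slope j = p i + left_gap i"
        "knot_slope (Suc j) = p i + left_gap i + right_gap i"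
      and curvature: "piece_curvature j = right_gap i / (x (Suc i) - x i - split_length i)"
      using y_step[OF i]
      by (simp_all add: knot_def knot_value_def knot_slope_def piece_curvature_def i_def[symmetric]
          left_gap_def right_gap_def)
    have ?increasing
      using diff split(2) by linarith
    moreover have ?value
      unfolding diff value_eqs slope_eqs curvature by (rule split(5))
    moreover have ?slope
      unfolding diff slope_eqs curvature by (rule split(6))
    ultimately show ?thesis
      by blast
  qed
  then show ?increasing and ?value and ?slope
    by simp_all
qed

lemma piece_curvature_bounds:
  assumes "j < 2 * (n - 1)"
  shows "1 / C^2 \<le> piece_curvature j" and "piece_curvature j \<le> C^2"
proof -
  define i where "i = Suc (j div 2)"
  have i: "i \<in> {1..<n}"
    using assms by (auto simp: i_def)
  note bounds = two_piece_curvatures_bounded[OF C_ge_1 _ gaps_pos[OF i] gap_bounds[OF i],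
      folded split_length_def]
  show "1 / C^2 \<le> piece_curvature j" and "piece_curvature j \<le> C^2"
    using bounds x_increasing[OF i]
    by (simp_all add: piece_curvature_def Let_def i_def[symmetric])
qed

lemma knot_at_data_point:
  assumes "i \<in> {1..n}"
  shows "knot (2 * (i - 1)) = x i" and "knot_value (2 * (i - 1)) = y i"
    and "knot_slope (2 * (i - 1)) = p i"
  using assms by (auto simp: knot_def knot_value_def knot_slope_def)

lemma curvature_INF_bounds:
  shows "1 / C^2 \<le> (INF j\<in>{..<2 * (n - 1)}. piece_curvature j)"
    and "j < 2 * (n - 1) \<Longrightarrow> (INF j\<in>{..<2 * (n - 1)}. piece_curvature j) \<le> piece_curvature j"
proof -
  show "1 / C^2 \<le> (INF j\<in>{..<2 * (n - 1)}. piece_curvature j)"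
    using n_ge_2 piece_curvature_bounds(1) by (intro cINF_greatest) (auto simp: lessThan_empty_iff)
  show "j < 2 * (n - 1) \<Longrightarrow> (INF j\<in>{..<2 * (n - 1)}. piece_curvature j) \<le> piece_curvature j"
    by (intro cINF_lower) auto
qed

sublocale refined: smoothed_quadratic_spline knot "2 * (n - 1)" knot_value knot_slope piece_curvature
  "pi / 4 * (INF j\<in>{..<2 * (n - 1)}. piece_curvature j)"
proof unfold_locales
  have "0 < 1 / C^2"
    using C_ge_1 by simp
  then show "0 < piece_curvature j" if "j < 2 * (n - 1)" for j
    using piece_curvature_bounds(1)[OF that] by linarith
  have INF_pos: "0 < (INF j\<in>{..<2 * (n - 1)}. piece_curvature j)"
    using order_less_le_trans[OF \<open>0 < 1 / C^2\<close> curvature_INF_bounds(1)] .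
  then show "0 < pi / 4 * (INF j\<in>{..<2 * (n - 1)}. piece_curvature j)"
    by simp
  show "pi / 4 * (INF j\<in>{..<2 * (n - 1)}. piece_curvature j) \<le> piece_curvature j"
    if "j < 2 * (n - 1)" for j
  proof -
    have "pi / 4 * (INF j\<in>{..<2 * (n - 1)}. piece_curvature j)
        \<le> (INF j\<in>{..<2 * (n - 1)}. piece_curvature j)"
      using INF_pos pi_less_4 by (simp add: mult_le_cancel_right1)
    also have "\<dots> \<le> piece_curvature j"
      by (rule curvature_INF_bounds(2)[OF that])
    finally show ?thesis .
  qed
qed (use n_ge_2 piece_step in auto)

lemma knot_endpoints: "knot 0 = x 1" "knot (2 * (n - 1)) = x n"
  using knot_at_data_point(1)[of 1] knot_at_data_point(1)[of n] n_ge_2 by simp_all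

lemma refined_domain: "{knot 0..knot (2 * (n - 1))} = {x 1..x n}"
  by (simp only: knot_endpoints)

lemma refined_interpolates:
  assumes "i \<in> {1..n}"
  shows "refined.spline (x i) = y i \<and> refined.spline' (x i) = p i"
    and "refined.smoothed (x i) = y i \<and> refined.smoothed' (x i) = p i \<and>
         refined.smoothed'' (x i) = pi / 4 * (INF j\<in>{..<2 * (n - 1)}. piece_curvature j)"
  using refined.spline_at_knot[of "2 * (i - 1)"] refined.smoothed_at_knot[of "2 * (i - 1)"]
    knot_at_data_point[OF assms] assms by auto

lemma refined_smoothed''_bounds:
  assumes "t \<in> {x 1..x n}"
  shows "1 / (2 * C^2) \<le> refined.smoothed'' t" and "refined.smoothed'' t \<le> 2 * C^2"
proof -
  have "1 / (2 * C^2) = 1 / 2 * (1 / C^2)"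
    by simp
  also have "\<dots> \<le> pi / 4 * (1 / C^2)"
    using pi_gt3 by (intro mult_right_mono) auto
  also have "\<dots> \<le> pi / 4 * (INF j\<in>{..<2 * (n - 1)}. piece_curvature j)"
    using curvature_INF_bounds(1) by (intro mult_left_mono) simp_all
  also have "\<dots> \<le> refined.smoothed'' t"
    using refined.smoothed''_bounds(1) assms unfolding refined_domain .
  finally show "1 / (2 * C^2) \<le> refined.smoothed'' t" .
  show "refined.smoothed'' t \<le> 2 * C^2"
    using refined.smoothed''_bounds(2) piece_curvature_bounds(2) assms unfolding refined_domain by blast
qed

lemma refined_piece:
  assumes "j < 2 * (n - 1)"
  shows "knot j < knot (Suc j) \<and>
    (\<forall>t\<in>{knot j..knot (Suc j)}.
       refined.spline' t = refined.spline' (knot j) + piece_curvature j * (t - knot j)) \<and>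
    1 / (2 * C^2) \<le> piece_curvature j \<and> piece_curvature j \<le> 2 * C^2"
proof -
  have "1 / (2 * C^2) \<le> 1 / C^2" and "C^2 \<le> 2 * C^2"
    using C_ge_1 by (simp_all add: frac_le)
  with piece_curvature_bounds[OF assms]
  have "1 / (2 * C^2) \<le> piece_curvature j" and "piece_curvature j \<le> 2 * C^2"
    by linarith+
  with refined.knots_increasing[OF assms] refined.spline'_on_piece[OF assms] show ?thesis
    by blast
qed

lemma interpolants_exist:
  "\<exists>f f' m a s. strict_convex_on {x 1..x n} f \<and> continuous_on {x 1..x n} f' \<and>
    (\<forall>t\<in>{x 1..x n}. (f has_real_derivative f' t) (at t within {x 1..x n})) \<and>
    (\<forall>i\<in>{1..n}. f (x i) = y i \<and> f' (x i) = p i) \<and>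
    1 \<le> m \<and> a 0 = x 1 \<and> a m = x n \<and>
    (\<forall>j<m. a j < a (Suc j) \<and> (\<forall>t\<in>{a j..a (Suc j)}. f' t = f' (a j) + s j * (t - a j)) \<and>
       1 / (2 * C^2) \<le> s j \<and> s j \<le> 2 * C^2) \<and>
    (\<exists>g g' g''. convex_on {x 1..x n} g \<and> continuous_on {x 1..x n} g'' \<and>
       (\<forall>t\<in>{x 1..x n}. (g has_real_derivative g' t) (at t within {x 1..x n})) \<and>
       (\<forall>t\<in>{x 1..x n}. (g' has_real_derivative g'' t) (at t within {x 1..x n})) \<and>
       (\<forall>i\<in>{1..n}. g (x i) = y i \<and> g' (x i) = p i \<and>
          g'' (x i) = pi / 4 * (INF j\<in>{..<m}. s j)) \<and>
       (\<forall>t\<in>{x 1<..<x n}. 1 / (2 * C^2) \<le> g'' t \<and> g'' t \<le> 2 * C^2))"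
proof (rule exI[of _ refined.spline], rule exI[of _ refined.spline'], rule exI[of _ "2 * (n - 1)"],
    rule exI[of _ knot], rule exI[of _ piece_curvature], intro conjI)
  show "strict_convex_on {x 1..x n} refined.spline"
    using refined.strict_convex_on_spline by (simp only: refined_domain)
  show "continuous_on {x 1..x n} refined.spline'"
    using refined.continuous_on_spline' by (simp only: refined_domain)
  show "\<forall>t\<in>{x 1..x n}.
      (refined.spline has_real_derivative refined.spline' t) (at t within {x 1..x n})"
    using refined.spline_has_derivative by (simp only: refined_domain) blast
  show "\<forall>i\<in>{1..n}. refined.spline (x i) = y i \<and> refined.spline' (x i) = p i"
    using refined_interpolates(1) by blast
  show "1 \<le> 2 * (n - 1)" and "knot 0 = x 1" and "knot (2 * (n - 1)) = x n"
    using n_ge_2 knot_endpoints by simp_all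
qed (use refined_piece in blast,
    rule exI[of _ refined.smoothed], rule exI[of _ refined.smoothed'], rule exI[of _ refined.smoothed''],
    use strict_convex_on_imp_convex_on[OF refined.strict_convex_on_smoothed, unfolded refined_domain]
      refined.continuous_on_smoothed''[unfolded refined_domain]
      refined.smoothed_has_derivative[unfolded refined_domain]
      refined.smoothed'_has_derivative[unfolded refined_domain]
      refined_interpolates(2) refined_smoothed''_bounds in auto)

end

theorem theorem5:
  fixes C :: real
  assumes "C \<ge> 1"
  shows "\<exists>K\<ge>1. \<forall>(n::nat) (x::nat \<Rightarrow> real) (y::nat \<Rightarrow> real) (p::nat \<Rightarrow> real).
    (2 \<le> n \<and>
     (\<forall>i\<in>{1..<n}. x i < x (Suc i) \<and> y i < y (Suc i) \<and> p i < p (Suc i)) \<and>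
     (\<forall>i\<in>{1..<n}.
        (x (Suc i) - x i) / C \<le> p (Suc i) - p i \<and>
        p (Suc i) - p i \<le> C * (x (Suc i) - x i) \<and>
        (p (Suc i) - (y (Suc i) - y i) / (x (Suc i) - x i)) / C
          \<le> (y (Suc i) - y i) / (x (Suc i) - x i) - p i \<and>
        (y (Suc i) - y i) / (x (Suc i) - x i) - p i
          \<le> C * (p (Suc i) - (y (Suc i) - y i) / (x (Suc i) - x i))))
    \<longrightarrow>
    (\<exists>(f::real \<Rightarrow> real) (f'::real \<Rightarrow> real) (m::nat) (a::nat \<Rightarrow> real) (s::nat \<Rightarrow> real).
       \<comment> \<open>(a) f strictly convex, C^1 on [x_1, x_n], interpolating\<close>
       strict_convex_on {x 1..x n} f \<and>
       continuous_on {x 1..x n} f' \<and>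
       (\<forall>t\<in>{x 1..x n}. (f has_real_derivative f' t) (at t within {x 1..x n})) \<and>
       (\<forall>i\<in>{1..n}. f (x i) = y i \<and> f' (x i) = p i) \<and>
       \<comment> \<open>f' piecewise linear with pieces [a j, a (j+1)] of slope s j in [1/K, K]\<close>
       1 \<le> m \<and> a 0 = x 1 \<and> a m = x n \<and>
       (\<forall>j<m. a j < a (Suc j) \<and>
          (\<forall>t\<in>{a j..a (Suc j)}. f' t = f' (a j) + s j * (t - a j)) \<and>
          1 / K \<le> s j \<and> s j \<le> K) \<and>
       \<comment> \<open>(b) a convex C^2 modification g with D = pi/4 * inf of slopes\<close>
       (\<exists>(g::real \<Rightarrow> real) (g'::real \<Rightarrow> real) (g''::real \<Rightarrow> real).
          convex_on {x 1..x n} g \<and>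
          continuous_on {x 1..x n} g'' \<and>
          (\<forall>t\<in>{x 1..x n}. (g has_real_derivative g' t) (at t within {x 1..x n})) \<and>
          (\<forall>t\<in>{x 1..x n}. (g' has_real_derivative g'' t) (at t within {x 1..x n})) \<and>
          (\<forall>i\<in>{1..n}. g (x i) = y i \<and> g' (x i) = p i \<and>
             g'' (x i) = pi / 4 * (INF j\<in>{..<m}. s j)) \<and>
          (\<forall>t\<in>{x 1<..<x n}. 1 / K \<le> g'' t \<and> g'' t \<le> K)))"
proof (intro exI[of _ "2 * C^2"] conjI allI impI)
  show "1 \<le> 2 * C^2"
    using assms one_le_power[of C 2] by linarith
qed (rule convex_hermite_data.interpolants_exist, unfold_locales, use assms in auto)

end
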